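(* The following two statements are equivalent. (P) For any $a\in(0,1)$ and $x\in(\frac12,1]$ there exists $\boldsymbol{\mu}\in\Lambda$ with (i) $\mu_1>\mu_2$, $\mu_1+\mu_2\ge1$, (ii) $\lambda(x,\boldsymbol{\mu})=a$, (iii) $x^\star(\boldsymbol{\mu})<\tilde x$, where $\tilde x=(\frac12+x)/2$. (D) For any $\alpha\in\mathbb{R}$ and $x\in(\frac12,1]$ there exists $\boldsymbol{\xi}=(\xi_1,\xi_2)\in\bar\Lambda$ with $(\bar{\mathrm{i}})$ $\xi_1>\xi_2$ and $\xi_1\ge-\xi_2$, $(\bar{\mathrm{ii}})$ $(1-x)\xi_1+x\xi_2=\alpha$, and $(\bar{\mathrm{iii}})$ $\bar d(\xi_1,(1-\tilde x)\xi_1+\tilde x\xi_2)>\bar d(\xi_2,(1-\tilde x)\xi_1+\tilde x\xi_2)$, where $\tilde x=(\frac12+x)/2$.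
   Context: $\Lambda=\{\boldsymbol{\mu}\in(0,1)^2:\mu_1\neq\mu_2\}$. $d(p,q)$ is the Bernoulli Kullback–Leibler divergence. $g(x,\boldsymbol{\mu})=\inf_{\lambda\in(0,1)}[(1-x)d(\lambda,\mu_1)+x\,d(\lambda,\mu_2)]$, $\lambda(x,\boldsymbol{\mu})$ is the minimizing $\lambda$, and $x^\star(\boldsymbol{\mu})=\arg\max_{x\in(0,1)}g(x,\boldsymbol{\mu})$. Let $\phi(\xi)=\log(1+e^\xi)$, so $\phi'(\xi)=\frac{e^\xi}{1+e^\xi}$ is a bijection $\mathbb{R}\to(0,1)$ with inverse $\phi'^{-1}(u)=\log\frac{u}{1-u}$; the natural parameter of $\boldsymbol{\mu}$ is $\boldsymbol{\xi}=(\phi'^{-1}(\mu_1),\phi'^{-1}(\mu_2))$, and $\bar\Lambda=\{\boldsymbol{\xi}\in\mathbb{R}^2:\xi_1\neq\xi_2\}$. The Bregman divergence is $\bar d(\alpha,\beta)=\phi(\alpha)-\phi(\beta)-(\alpha-\beta)\phi'(\beta)$, so that $d(\mu_1,\mu_2)=\bar d(\xi_2,\xi_1)$. *)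

theory Defs
  imports Complex_Main
begin

definition kl :: "real \<Rightarrow> real \<Rightarrow> real" where
  "kl p q = p * ln (p / q) + (1 - p) * ln ((1 - p) / (1 - q))"

definition Lambda :: "(real \<times> real) set" where
  "Lambda = {mu. fst mu \<in> {0<..<1} \<and> snd mu \<in> {0<..<1} \<and> fst mu \<noteq> snd mu}"

definition gobj :: "real \<Rightarrow> real \<times> real \<Rightarrow> real \<Rightarrow> real" where
  "gobj x mu l = (1 - x) * kl l (fst mu) + x * kl l (snd mu)"

definition gfun :: "real \<Rightarrow> real \<times> real \<Rightarrow> real" where
  "gfun x mu = (INF l\<in>{0<..<1}. gobj x mu l)"

definition lam :: "real \<Rightarrow> real \<times> real \<Rightarrow> real" where
  "lam x mu = (THE l. l \<in> {0<..<1} \<and> (\<forall>l'\<in>{0<..<1}. gobj x mu l \<le> gobj x mu l'))"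

definition xstar :: "real \<times> real \<Rightarrow> real" where
  "xstar mu = (THE x. x \<in> {0<..<1} \<and> (\<forall>y\<in>{0<..<1}. gfun y mu \<le> gfun x mu))"

definition phi :: "real \<Rightarrow> real" where
  "phi \<xi> = ln (1 + exp \<xi>)"

definition phi' :: "real \<Rightarrow> real" where
  "phi' \<xi> = exp \<xi> / (1 + exp \<xi>)"

definition dbar :: "real \<Rightarrow> real \<Rightarrow> real" where
  "dbar a b = phi a - phi b - (a - b) * phi' b"

definition Lambda_bar :: "(real \<times> real) set" where
  "Lambda_bar = {\<xi>. fst \<xi> \<noteq> snd \<xi>}"

end

theory Submission
  imports Defs
begin

text \<open>
  In natural parameters \<mu> = (phi' s1, phi' s2) every Bernoulli divergence is a Bregman divergence
  of phi: kl (phi' e) (phi' s) = dbar s e. So for \<lambda> = phi' t the objective defining g splits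
  as the Jensen gap (1 - x) phi s1 + x phi s2 - phi m plus dbar m t, where m = (1 - x) s1 + x s2.
  Hence \<lambda>(x, \<mu>) = phi' m and g(x, \<mu>) is the Jensen gap. Its derivative in x,
  dbar s2 m - dbar s1 m, is strictly decreasing, positive at 0 and negative at 1, so x*(\<mu>) is its
  unique zero and x*(\<mu>) < x~ iff the derivative is negative at x~, which is condition (iii-bar).
  Conditions (i) and (ii) translate because phi' is an increasing bijection onto (0,1) with
  1 - phi' t = phi' (-t).
\<close>

lemma one_plus_exp_gt_zero [simp]: "0 < 1 + exp (t :: real)"
  by (simp add: add_pos_pos)

lemma one_plus_exp_neq_zero [simp]: "1 + exp (t :: real) \<noteq> 0"
  using one_plus_exp_gt_zero by (metis less_irrefl)

lemma phi'_minus: "phi' (- t) = 1 - phi' t"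
  unfolding phi'_def by (simp add: exp_minus field_simps)

lemma strict_mono_phi': "strict_mono phi'"
proof (rule strict_monoI)
  fix a b :: real
  assume "a < b"
  have "phi' t = 1 / (1 + exp (- t))" for t
    unfolding phi'_def by (simp add: exp_minus field_simps)
  then show "phi' a < phi' b"
    using \<open>a < b\<close> by (simp add: divide_strict_left_mono)
qed

lemma phi'_less_iff [simp]: "phi' a < phi' b \<longleftrightarrow> a < b"
  using strict_mono_phi' by (rule strict_mono_less)

lemma phi'_eq_iff [simp]: "phi' a = phi' b \<longleftrightarrow> a = b"
  using strict_mono_phi' by (rule strict_mono_eq)

lemma range_phi': "range phi' = {0<..<1}"
proof (intro equalityI subsetI)
  show "u \<in> {0<..<1}" if "u \<in> range phi'" for u
    using that unfolding phi'_def by auto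
  show "u \<in> range phi'" if "u \<in> {0<..<1}" for u
  proof
    show "u = phi' (ln (u / (1 - u)))"
      using that unfolding phi'_def by (auto simp: field_simps)
  qed simp
qed

lemma phi'_diff_mult_pos: "a \<noteq> b \<Longrightarrow> 0 < (a - b) * (phi' a - phi' b)"
  by (cases a b rule: linorder_cases) (auto simp: mult_neg_neg)

lemma kl_phi'_phi': "kl (phi' e) (phi' s) = dbar s e"
proof -
  have nonzero: "phi' t \<noteq> 0" "phi' t \<noteq> 1" for t
    using range_phi' by (metis greaterThanLessThan_iff less_irrefl rangeI)+
  have ln_phi': "ln (phi' t) = t - phi t" and ln_one_minus_phi': "ln (1 - phi' t) = - phi t" for t
    unfolding phi'_minus[symmetric] unfolding phi'_def phi_def
    by (simp_all add: ln_div exp_minus field_simps)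
  show ?thesis
    unfolding kl_def dbar_def by (simp add: ln_div nonzero ln_phi' ln_one_minus_phi' algebra_simps)
qed

lemma has_real_derivative_phi: "(phi has_real_derivative phi' t) (at t)"
  unfolding phi_def phi'_def
  by (auto intro!: derivative_eq_intros simp: add_pos_pos)

lemma strict_mono_deriv_imp_above_tangent:
  fixes f f' :: "real \<Rightarrow> real"
  assumes deriv: "\<And>t. (f has_real_derivative f' t) (at t)"
    and mono: "strict_mono f'" and "a \<noteq> b"
  shows "f b + (a - b) * f' b < f a"
proof (cases "a < b")
  case True
  then obtain z where "z < b" and "f b - f a = (b - a) * f' z"
    using MVT2[of a b f f'] deriv by blast
  moreover have "f' z < f' b"
    using \<open>z < b\<close> mono by (simp add: strict_mono_less)
  ultimately show ?thesis
    using mult_strict_left_mono[of "f' z" "f' b" "b - a"] True by (simp add: algebra_simps)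
next
  case False
  then have "b < a" using \<open>a \<noteq> b\<close> by simp
  then obtain z where "b < z" and "f a - f b = (a - b) * f' z"
    using MVT2[of b a f f'] deriv by blast
  moreover have "f' b < f' z"
    using \<open>b < z\<close> mono by (simp add: strict_mono_less)
  ultimately show ?thesis
    using mult_strict_left_mono[of "f' b" "f' z" "a - b"] \<open>b < a\<close> by (simp add: algebra_simps)
qed

lemma dbar_pos: "a \<noteq> b \<Longrightarrow> 0 < dbar a b"
  using strict_mono_deriv_imp_above_tangent[OF has_real_derivative_phi strict_mono_phi']
  unfolding dbar_def by (simp add: algebra_simps)

lemma dbar_self [simp]: "dbar a a = 0"
  unfolding dbar_def by simp

definition mix :: "real \<Rightarrow> real \<Rightarrow> real \<Rightarrow> real" where
  "mix s1 s2 y = (1 - y) * s1 + y * s2"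

definition jensen_gap :: "real \<Rightarrow> real \<Rightarrow> real \<Rightarrow> real" where
  "jensen_gap s1 s2 y = (1 - y) * phi s1 + y * phi s2 - phi (mix s1 s2 y)"

lemma gobj_phi':
  "gobj x (phi' s1, phi' s2) (phi' t) = jensen_gap s1 s2 x + dbar (mix s1 s2 x) t"
  by (simp add: gobj_def kl_phi'_phi' jensen_gap_def mix_def dbar_def algebra_simps)

lemma gobj_phi'_ge: "jensen_gap s1 s2 x \<le> gobj x (phi' s1, phi' s2) (phi' t)"
  using dbar_pos[of "mix s1 s2 x" t] by (cases "mix s1 s2 x = t") (auto simp: gobj_phi')

lemma lam_phi': "lam x (phi' s1, phi' s2) = phi' (mix s1 s2 x)"
  unfolding lam_def range_phi'[symmetric]
proof (rule the_equality)
  show "phi' (mix s1 s2 x) \<in> range phi' \<and>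
      (\<forall>l\<in>range phi'. gobj x (phi' s1, phi' s2) (phi' (mix s1 s2 x)) \<le> gobj x (phi' s1, phi' s2) l)"
    using gobj_phi'_ge by (auto simp: gobj_phi')
next
  fix l
  assume l: "l \<in> range phi' \<and> (\<forall>l'\<in>range phi'. gobj x (phi' s1, phi' s2) l \<le> gobj x (phi' s1, phi' s2) l')"
  then obtain t where t: "l = phi' t"
    by blast
  have "gobj x (phi' s1, phi' s2) l \<le> gobj x (phi' s1, phi' s2) (phi' (mix s1 s2 x))"
    using l by blast
  then have "\<not> 0 < dbar (mix s1 s2 x) t"
    by (simp add: t gobj_phi')
  then have "t = mix s1 s2 x"
    using dbar_pos by metis
  then show "l = phi' (mix s1 s2 x)"
    using t by simp
qed

lemma gfun_phi': "gfun x (phi' s1, phi' s2) = jensen_gap s1 s2 x"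
  unfolding gfun_def range_phi'[symmetric]
proof (rule cInf_eq_minimum)
  show "jensen_gap s1 s2 x \<in> gobj x (phi' s1, phi' s2) ` range phi'"
    using gobj_phi'[of x s1 s2 "mix s1 s2 x"] by (metis add_0_right dbar_self rangeI image_eqI)
qed (auto intro: gobj_phi'_ge)

lemma jensen_gap_has_derivative:
  "(jensen_gap s1 s2 has_real_derivative dbar s2 (mix s1 s2 y) - dbar s1 (mix s1 s2 y)) (at y)"
proof -
  have "((\<lambda>y. phi (mix s1 s2 y)) has_real_derivative phi' (mix s1 s2 y) * (s2 - s1)) (at y)"
    unfolding mix_def
    by (rule DERIV_chain2[OF has_real_derivative_phi]) (auto intro!: derivative_eq_intros)
  then have "(jensen_gap s1 s2 has_real_derivative
      - phi s1 + phi s2 - phi' (mix s1 s2 y) * (s2 - s1)) (at y)"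
    unfolding jensen_gap_def[abs_def] by (auto intro!: derivative_eq_intros)
  moreover have "- phi s1 + phi s2 - phi' (mix s1 s2 y) * (s2 - s1)
      = dbar s2 (mix s1 s2 y) - dbar s1 (mix s1 s2 y)"
    unfolding dbar_def by (simp add: algebra_simps)
  ultimately show ?thesis
    by simp
qed

lemma jensen_gap_deriv_strict_decreasing:
  assumes "s1 \<noteq> s2" and "y < z"
  shows "dbar s2 (mix s1 s2 z) - dbar s1 (mix s1 s2 z) < dbar s2 (mix s1 s2 y) - dbar s1 (mix s1 s2 y)"
proof -
  have diff: "mix s1 s2 z - mix s1 s2 y = (z - y) * (s2 - s1)"
    unfolding mix_def by (simp add: algebra_simps)
  moreover have "(z - y) * (s2 - s1) \<noteq> 0"
    using assms by simp
  ultimately have "mix s1 s2 z \<noteq> mix s1 s2 y"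
    by auto
  then have "0 < (z - y) * ((s2 - s1) * (phi' (mix s1 s2 z) - phi' (mix s1 s2 y)))"
    using phi'_diff_mult_pos diff by (metis mult.assoc)
  then have "0 < (s2 - s1) * (phi' (mix s1 s2 z) - phi' (mix s1 s2 y))"
    using assms(2) by (simp add: zero_less_mult_iff)
  then show ?thesis
    unfolding dbar_def by (simp add: algebra_simps)
qed

lemma critical_point_strict_max:
  fixes f f' :: "real \<Rightarrow> real"
  assumes deriv: "\<And>t. (f has_real_derivative f' t) (at t)"
    and decreasing: "\<And>s t. s < t \<Longrightarrow> f' t < f' s"
    and "f' x0 = 0" and "y \<noteq> x0"
  shows "f y < f x0"
proof -
  have cont: "continuous_on {a..b} f" for a b
    using deriv by (blast intro: DERIV_atLeastAtMost_imp_continuous_on)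
  show ?thesis
  proof (cases "y < x0")
    case True
    then show ?thesis
      using DERIV_pos_imp_increasing_open[OF True _ cont] deriv decreasing[of _ x0] \<open>f' x0 = 0\<close>
      by fastforce
  next
    case False
    then have "x0 < y"
      using \<open>y \<noteq> x0\<close> by simp
    then show ?thesis
      using DERIV_neg_imp_decreasing_open[OF \<open>x0 < y\<close> _ cont] deriv decreasing[of x0] \<open>f' x0 = 0\<close>
      by fastforce
  qed
qed

text \<open>By kl_phi'_phi', this says d(\<lambda>, \<mu>1) = d(\<lambda>, \<mu>2) for \<lambda> = \<lambda>(x*(\<mu>), \<mu>).\<close>

lemma xstar_phi'_critical:
  assumes "s1 \<noteq> s2"
  shows "dbar s1 (mix s1 s2 (xstar (phi' s1, phi' s2))) = dbar s2 (mix s1 s2 (xstar (phi' s1, phi' s2)))"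
proof -
  define D where "D = (\<lambda>y. dbar s2 (mix s1 s2 y) - dbar s1 (mix s1 s2 y))"
  have "0 < D 0" and "D 1 < 0"
    using dbar_pos assms unfolding D_def mix_def by auto
  moreover have "isCont D y" for y
    unfolding D_def dbar_def mix_def phi_def phi'_def by (intro continuous_intros) auto
  ultimately obtain x0 where x0: "0 \<le> x0" "x0 \<le> 1" "D x0 = 0"
    using IVT2[of D 1 0 0] by force
  with \<open>0 < D 0\<close> \<open>D 1 < 0\<close> have x0_in: "x0 \<in> {0<..<1}"
    by (cases "x0 = 0"; cases "x0 = 1") auto
  have max: "jensen_gap s1 s2 y < jensen_gap s1 s2 x0" if "y \<noteq> x0" for y
    using critical_point_strict_max[of "jensen_gap s1 s2" D, OF _ _ \<open>D x0 = 0\<close> that]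
      jensen_gap_has_derivative jensen_gap_deriv_strict_decreasing[OF assms]
    unfolding D_def by blast
  have "xstar (phi' s1, phi' s2) = x0"
    unfolding xstar_def gfun_phi'
  proof (rule the_equality)
    show "x0 \<in> {0<..<1} \<and> (\<forall>y\<in>{0<..<1}. jensen_gap s1 s2 y \<le> jensen_gap s1 s2 x0)"
      using x0_in max by (metis order.refl less_imp_le)
  next
    fix x
    assume "x \<in> {0<..<1} \<and> (\<forall>y\<in>{0<..<1}. jensen_gap s1 s2 y \<le> jensen_gap s1 s2 x)"
    then show "x = x0"
      using x0_in max[of x] by fastforce
  qed
  then show ?thesis
    using \<open>D x0 = 0\<close> unfolding D_def by simp
qed

lemma xstar_phi'_less_iff:
  assumes "s1 \<noteq> s2"
  shows "xstar (phi' s1, phi' s2) < t \<longleftrightarrow> dbar s2 (mix s1 s2 t) < dbar s1 (mix s1 s2 t)"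
proof -
  let ?x = "xstar (phi' s1, phi' s2)"
  have "dbar s1 (mix s1 s2 ?x) = dbar s2 (mix s1 s2 ?x)"
    by (rule xstar_phi'_critical[OF assms])
  then show ?thesis
    using jensen_gap_deriv_strict_decreasing[OF assms, of ?x t]
      jensen_gap_deriv_strict_decreasing[OF assms, of t ?x]
    by (cases t ?x rule: linorder_cases) auto
qed

lemma Lambda_eq_image: "Lambda = (\<lambda>\<xi>. (phi' (fst \<xi>), phi' (snd \<xi>))) ` Lambda_bar"
  unfolding Lambda_def Lambda_bar_def range_phi'[symmetric] by (force simp: image_iff)

lemma conditions_in_natural_parameters:
  fixes \<xi> :: "real \<times> real"
  defines "mu \<equiv> (phi' (fst \<xi>), phi' (snd \<xi>))"
  shows "(snd mu < fst mu \<and> 1 \<le> fst mu + snd mu \<and> lam x mu = phi' \<alpha> \<and> xstar mu < t)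
    \<longleftrightarrow> (snd \<xi> < fst \<xi> \<and> - snd \<xi> \<le> fst \<xi> \<and> (1 - x) * fst \<xi> + x * snd \<xi> = \<alpha> \<and>
      dbar (snd \<xi>) ((1 - t) * fst \<xi> + t * snd \<xi>) < dbar (fst \<xi>) ((1 - t) * fst \<xi> + t * snd \<xi>))"
proof -
  have "1 \<le> phi' (fst \<xi>) + phi' (snd \<xi>) \<longleftrightarrow> - snd \<xi> \<le> fst \<xi>"
    using phi'_less_iff[of "fst \<xi>" "- snd \<xi>"] phi'_minus[of "snd \<xi>"] by linarith
  then show ?thesis
    using xstar_phi'_less_iff[of "fst \<xi>" "snd \<xi>" t]
    unfolding mu_def by (auto simp: lam_phi' mix_def)
qed

theorem mainTheorem3:
  shows "(\<forall>a\<in>{0<..<(1::real)}. \<forall>x\<in>{1/2<..(1::real)}.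
            \<exists>mu\<in>Lambda. fst mu > snd mu \<and> fst mu + snd mu \<ge> 1 \<and>
               lam x mu = a \<and> xstar mu < (1/2 + x) / 2)
         \<longleftrightarrow>
         (\<forall>\<alpha>::real. \<forall>x\<in>{1/2<..(1::real)}.
            \<exists>\<xi>\<in>Lambda_bar. fst \<xi> > snd \<xi> \<and> fst \<xi> \<ge> - snd \<xi> \<and>
               (1 - x) * fst \<xi> + x * snd \<xi> = \<alpha> \<and>
               dbar (fst \<xi>) ((1 - (1/2 + x) / 2) * fst \<xi> + ((1/2 + x) / 2) * snd \<xi>)
                 > dbar (snd \<xi>) ((1 - (1/2 + x) / 2) * fst \<xi> + ((1/2 + x) / 2) * snd \<xi>))"
  unfolding Lambda_eq_image range_phi'[symmetric] ball_simps(6,9) bex_simps(7)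
    conditions_in_natural_parameters ..

end
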